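(* Let $N\ge1$, integers $y_1<\cdots<y_N$, an integer $M$ and $t\ge0$. For TASEP started with particles at $y_1,\dots,y_N$, the probability that the leftmost particle has made at least $M$ jumps by time $t$ is $$\mathbb{P}[x_1\ge y_1+M]=\sum_{y_1+M\le x_1<x_2<\cdots<x_N}P(x_1,\dots,x_N;t\,|\,y_1,\dots,y_N;0)=\det\big[F_{k-j+1}(y_1-y_j+M+k-1;t)\big]_{j,k=1}^N .$$
   Context: TASEP on $\mathbb{Z}$: each particle independently jumps one site to the right at rate 1 provided the target site is empty; particles labelled $1,\dots,N$ from left to right, particle $j$ starting at $y_j$; $x_j$ denotes the position of particle $j$ at time $t$. $P(x_1,\dots,x_N;t|y_1,\dots,y_N;0)$ is the transition probability (Green function) from $(y_j)$ to $(x_j)$ in time $t$. For integers $n,m$ and $t\ge0$: $F_n(m;t)=e^{-t}\sum_{k\ge0}\frac{(n)_k t^{m+k}}{k!(m+k)!}$ with $(n)_k=n(n+1)\cdots(n+k-1)$, $(n)_0=1$, and $1/(m+k)!:=0$ for $m+k<0$. *)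

theory Defs
  imports "HOL-Analysis.Infinite_Sum" "Jordan_Normal_Form.Determinant"
begin

text \<open>Configurations of N TASEP particles: lists of length N, entry j (0-based) is the
position of particle j+1.  Particle j may jump iff the site to its right is empty.\<close>

definition can_jump :: "int list \<Rightarrow> nat \<Rightarrow> bool" where
  "can_jump xs j \<longleftrightarrow> j < length xs \<and> (Suc j = length xs \<or> xs ! Suc j > xs ! j + 1)"

definition jump :: "int list \<Rightarrow> nat \<Rightarrow> int list" where
  "jump xs j = xs[j := xs ! j + 1]"

text \<open>Powers of the generator Q of TASEP (rate 1 jumps): Qpow n y x = (Q^n)(y,x),
computed via (Q f)(y) = sum over allowed jumps j of (f(jump y j) - f(y)).\<close>

fun Qpow :: "nat \<Rightarrow> int list \<Rightarrow> int list \<Rightarrow> real" where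
  "Qpow 0 y x = (if x = y then 1 else 0)"
| "Qpow (Suc n) y x =
     (\<Sum>j<length y. if can_jump y j then Qpow n (jump y j) x - Qpow n y x else 0)"

definition tasep_P :: "int list \<Rightarrow> real \<Rightarrow> int list \<Rightarrow> real" where
  "tasep_P x t y = (\<Sum>n. t ^ n / fact n * Qpow n y x)"

definition F :: "int \<Rightarrow> int \<Rightarrow> real \<Rightarrow> real" where
  "F n m t = exp (- t) *
     (\<Sum>k. pochhammer (real_of_int n) k / fact k *
           (if m + int k \<ge> 0 then t ^ nat (m + int k) / fact (nat (m + int k)) else 0))"

end

theory Submission
  imports "HOL-Analysis.FPS_Convergence" Defs
begin

(* Fix a = y_1 + M and let Phi_n(m) be the power series in t summing to F_n(m;t). For a
   configuration z let Gamma(z) = det [Phi_{k-j+1}(a - z_j + k - 1)]. The relations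
   Phi_n(m) = Phi_n(m+1) + Phi_{n-1}(m) and d/dt Phi_n(m) = Phi_n(m-1) - Phi_n(m) show that
   Gamma solves the backward equation of TASEP, d/dt Gamma(z) = sum_j (Gamma(z + e_j) - Gamma(z)),
   in which the terms of blocked particles vanish: if z_{j+1} = z_j + 1, the first relation turns
   row j of Gamma(z + e_j) into the sum of rows j and j+1 of Gamma(z), and the extra determinant
   has two equal rows. At t = 0 the matrix is unitriangular if z_1 >= a and has a zero first row
   otherwise, so Gamma(z) starts with the indicator of z_1 >= a. Hence n! [t^n] Gamma(y) is the
   sum of Q^n(y, x) over x_1 >= a, and since sum_x |Q^n(y, x)| <= (2N)^n the double series
   sum_n sum_x t^n/n! Q^n(y, x) may be summed in either order; this gives the formula for every
   real t. *)

section \<open>Pochhammer symbols, sums and power series\<close>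

lemma pochhammer_div_fact_Suc:
  "pochhammer (x :: 'a :: field_char_0) (Suc k) / fact (Suc k) =
     pochhammer x k / fact k + pochhammer (x - 1) (Suc k) / fact (Suc k)"
  using gbinomial_Suc_Suc[of "x + of_nat k - 1" k]
  by (simp add: gbinomial_pochhammer' algebra_simps)

lemma abs_pochhammer_div_fact_le: "\<bar>pochhammer (x :: real) k / fact k\<bar> \<le> (\<bar>x\<bar> + 1) ^ k"
proof (induction k)
  case (Suc k)
  have "\<bar>pochhammer x (Suc k) / fact (Suc k)\<bar> =
          \<bar>pochhammer x k / fact k\<bar> * (\<bar>x + of_nat k\<bar> / (of_nat k + 1))"
    by (simp add: pochhammer_Suc abs_mult)
  also have "\<dots> \<le> (\<bar>x\<bar> + 1) ^ k * (\<bar>x\<bar> + 1)"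
  proof (intro mult_mono Suc.IH)
    have "\<bar>x + of_nat k\<bar> \<le> \<bar>x\<bar> + of_nat k"
      using abs_triangle_ineq[of x "of_nat k"] by simp
    also have "\<dots> \<le> (\<bar>x\<bar> + 1) * (of_nat k + 1)"
      by (simp add: algebra_simps)
    finally show "\<bar>x + of_nat k\<bar> / (of_nat k + 1) \<le> \<bar>x\<bar> + 1"
      by (simp add: divide_le_eq)
  qed auto
  finally show ?case by (simp only: power_Suc2)
qed simp

lemma sums_exp_real: "(\<lambda>n. (x :: real) ^ n / fact n) sums exp x"
  using exp_converges[of x] by (simp add: divide_inverse mult.commute)

lemma has_sum_sum:
  fixes f :: "'i \<Rightarrow> 'a \<Rightarrow> 'b :: topological_comm_monoid_add"
  assumes "finite I" "\<And>i. i \<in> I \<Longrightarrow> (f i has_sum s i) A"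
  shows "((\<lambda>x. \<Sum>i\<in>I. f i x) has_sum (\<Sum>i\<in>I. s i)) A"
  using assms by (induction I rule: finite_induct) (auto intro!: has_sum_add)

lemma has_sum_diff:
  fixes f g :: "'a \<Rightarrow> 'b :: topological_ab_group_add"
  assumes "(f has_sum a) A" "(g has_sum b) A"
  shows "((\<lambda>x. f x - g x) has_sum (a - b)) A"
proof -
  have "((\<lambda>x. - g x) has_sum - b) A"
    using assms(2) by (simp add: has_sum_uminus)
  from has_sum_add[OF assms(1) this] show ?thesis by simp
qed

lemma fps_deriv_prod:
  fixes g :: "'i \<Rightarrow> 'a :: comm_ring_1 fps"
  assumes "finite S"
  shows "fps_deriv (\<Prod>j\<in>S. g j) = (\<Sum>i\<in>S. fps_deriv (g i) * (\<Prod>j\<in>S - {i}. g j))"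
  using assms
proof (induction S rule: finite_induct)
  case (insert x S)
  have "(\<Prod>j\<in>insert x S - {i}. g j) = g x * (\<Prod>j\<in>S - {i}. g j)" if "i \<in> S" for i
  proof -
    have "insert x S - {i} = insert x (S - {i})" using insert.hyps that by auto
    then show ?thesis using insert.hyps by simp
  qed
  moreover have "insert x S - {x} = S" using insert.hyps by auto
  ultimately show ?case
    using insert by (simp add: sum_distrib_left algebra_simps)
qed simp

lemma fps_conv_radius_sum_infinite:
  fixes f :: "'i \<Rightarrow> 'a :: {banach, real_normed_div_algebra} fps"
  assumes "\<And>i. i \<in> A \<Longrightarrow> fps_conv_radius (f i) = \<infinity>"
  shows "fps_conv_radius (\<Sum>i\<in>A. f i) = \<infinity>"
  using assms
proof (induction A rule: infinite_finite_induct)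
  case (insert x A)
  then show ?case using fps_conv_radius_add[of "f x" "sum f A"] by simp
qed simp_all

lemma fps_conv_radius_prod_infinite:
  fixes f :: "'i \<Rightarrow> 'a :: {banach, real_normed_div_algebra, comm_ring_1} fps"
  assumes "\<And>i. i \<in> A \<Longrightarrow> fps_conv_radius (f i) = \<infinity>"
  shows "fps_conv_radius (\<Prod>i\<in>A. f i) = \<infinity>"
  using assms
proof (induction A rule: infinite_finite_induct)
  case (insert x A)
  then show ?case using fps_conv_radius_mult[of "f x" "prod f A"] by simp
qed simp_all

lemma eval_fps_sum:
  fixes f :: "'i \<Rightarrow> 'a :: {banach, real_normed_div_algebra} fps"
  assumes "\<And>i. i \<in> A \<Longrightarrow> fps_conv_radius (f i) = \<infinity>"
  shows "eval_fps (\<Sum>i\<in>A. f i) z = (\<Sum>i\<in>A. eval_fps (f i) z)"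
  using assms
proof (induction A rule: infinite_finite_induct)
  case (insert x A)
  then show ?case by (simp add: eval_fps_add fps_conv_radius_sum_infinite)
qed simp_all

lemma eval_fps_prod:
  fixes f :: "'i \<Rightarrow> 'a :: {banach, real_normed_div_algebra, comm_ring_1} fps"
  assumes "\<And>i. i \<in> A \<Longrightarrow> fps_conv_radius (f i) = \<infinity>"
  shows "eval_fps (\<Prod>i\<in>A. f i) z = (\<Prod>i\<in>A. eval_fps (f i) z)"
  using assms
proof (induction A rule: infinite_finite_induct)
  case (insert x A)
  then show ?case by (simp add: eval_fps_mult fps_conv_radius_prod_infinite)
qed simp_all

section \<open>Determinants given by their entries\<close>

definition leibniz_det :: "nat \<Rightarrow> (nat \<Rightarrow> nat \<Rightarrow> 'a :: comm_ring_1) \<Rightarrow> 'a" where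
  "leibniz_det n f = (\<Sum>p\<in>{p. p permutes {0..<n}}. signof p * (\<Prod>i=0..<n. f i (p i)))"

lemma det_mat_eq_leibniz_det: "det (mat n n (\<lambda>(i, j). f i j)) = leibniz_det n f"
  unfolding det_def'[OF mat_carrier] leibniz_det_def
proof (intro sum.cong refl arg_cong[where f = "\<lambda>x. _ * x"] prod.cong)
  fix p i assume "p \<in> {p. p permutes {0..<n}}" and "i \<in> {0..<n}"
  then show "mat n n (\<lambda>(i, j). f i j) $$ (i, p i) = f i (p i)"
    using permutes_in_image[of p "{0..<n}" i] by auto
qed

lemma leibniz_det_row_expansion:
  assumes "i < n"
  shows "leibniz_det n (f(i := g)) =
           (\<Sum>p\<in>{p. p permutes {0..<n}}. signof p * (g (p i) * (\<Prod>j\<in>{0..<n} - {i}. f j (p j))))"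
  unfolding leibniz_det_def
proof (intro sum.cong refl arg_cong[where f = "\<lambda>x. _ * x"])
  fix p
  have "(\<Prod>j=0..<n. (f(i := g)) j (p j)) = g (p i) * (\<Prod>j\<in>{0..<n} - {i}. (f(i := g)) j (p j))"
    using prod.remove[of "{0..<n}" i "\<lambda>j. (f(i := g)) j (p j)"] assms by simp
  also have "(\<Prod>j\<in>{0..<n} - {i}. (f(i := g)) j (p j)) = (\<Prod>j\<in>{0..<n} - {i}. f j (p j))"
    by (intro prod.cong) auto
  finally show "(\<Prod>j=0..<n. (f(i := g)) j (p j)) = g (p i) * (\<Prod>j\<in>{0..<n} - {i}. f j (p j))"
    .
qed

lemma leibniz_det_row_add:
  assumes "i < n"
  shows "leibniz_det n (f(i := (\<lambda>k. u k + v k))) = leibniz_det n (f(i := u)) + leibniz_det n (f(i := v))"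
  unfolding leibniz_det_row_expansion[OF assms] sum.distrib[symmetric]
  by (intro sum.cong refl) (simp add: algebra_simps)

lemma leibniz_det_row_diff:
  assumes "i < n"
  shows "leibniz_det n (f(i := (\<lambda>k. u k - v k))) = leibniz_det n (f(i := u)) - leibniz_det n (f(i := v))"
  using leibniz_det_row_add[OF assms, of f "\<lambda>k. u k - v k" v] by simp

lemma leibniz_det_zero_row:
  assumes "i < n" "\<And>k. f i k = 0"
  shows "leibniz_det n f = 0"
  using leibniz_det_row_expansion[OF assms(1), of f "f i"] assms(2) by simp

lemma leibniz_det_equal_rows:
  assumes "i < n" "j < n" "i \<noteq> j" "f i = f j"
  shows "leibniz_det n f = 0"
proof -
  have "Matrix.row (mat n n (\<lambda>(i, j). f i j)) i = Matrix.row (mat n n (\<lambda>(i, j). f i j)) j"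
    using assms by (intro eq_vecI) auto
  with assms show ?thesis
    using det_identical_rows[of "mat n n (\<lambda>(i, j). f i j)" n i j] by (simp add: det_mat_eq_leibniz_det)
qed

lemma leibniz_det_upper_unitriangular:
  assumes "\<And>i j. j < i \<Longrightarrow> i < n \<Longrightarrow> f i j = 0" and "\<And>i. i < n \<Longrightarrow> f i i = 1"
  shows "leibniz_det n f = 1"
proof -
  have "upper_triangular (mat n n (\<lambda>(i, j). f i j))"
    using assms(1) by (auto simp: upper_triangular_def)
  then have "det (mat n n (\<lambda>(i, j). f i j)) = prod_list (diag_mat (mat n n (\<lambda>(i, j). f i j)))"
    by (rule det_upper_triangular[of _ n]) simp
  also have "diag_mat (mat n n (\<lambda>(i, j). f i j)) = map (\<lambda>i. 1) [0..<n]"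
    using assms(2) by (simp add: diag_mat_def)
  finally show ?thesis by (simp add: det_mat_eq_leibniz_det map_replicate_const)
qed

lemma fps_deriv_leibniz_det:
  fixes f :: "nat \<Rightarrow> nat \<Rightarrow> 'a :: comm_ring_1 fps"
  shows "fps_deriv (leibniz_det n f) = (\<Sum>i<n. leibniz_det n (f(i := (\<lambda>k. fps_deriv (f i k)))))"
proof -
  have "fps_deriv (leibniz_det n f) =
     (\<Sum>p\<in>{p. p permutes {0..<n}}. \<Sum>i<n.
        signof p * (fps_deriv (f i (p i)) * (\<Prod>j\<in>{0..<n} - {i}. f j (p j))))"
    unfolding leibniz_det_def fps_deriv_sum
    by (intro sum.cong refl) (simp add: fps_deriv_prod sum_distrib_left atLeast0LessThan)
  also have "\<dots> = (\<Sum>i<n. leibniz_det n (f(i := (\<lambda>k. fps_deriv (f i k)))))"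
    by (subst sum.swap) (simp add: leibniz_det_row_expansion)
  finally show ?thesis .
qed

lemma fps_conv_radius_leibniz_det:
  fixes f :: "nat \<Rightarrow> nat \<Rightarrow> 'a :: {banach, real_normed_div_algebra, comm_ring_1} fps"
  assumes "\<And>i j. fps_conv_radius (f i j) = \<infinity>"
  shows "fps_conv_radius (leibniz_det n f) = \<infinity>"
  unfolding leibniz_det_def fps_of_int[symmetric]
  by (intro fps_conv_radius_sum_infinite)
    (simp add: fps_conv_radius_cmult_left fps_conv_radius_prod_infinite assms)

lemma eval_fps_leibniz_det:
  fixes f :: "nat \<Rightarrow> nat \<Rightarrow> 'a :: {banach, real_normed_div_algebra, comm_ring_1} fps"
  assumes "\<And>i j. fps_conv_radius (f i j) = \<infinity>"
  shows "eval_fps (leibniz_det n f) z = leibniz_det n (\<lambda>i j. eval_fps (f i j) z)"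
  unfolding leibniz_det_def fps_of_int[symmetric]
  by (simp add: eval_fps_sum eval_fps_mult eval_fps_prod fps_conv_radius_cmult_left
      fps_conv_radius_prod_infinite assms)

section \<open>The functions F as power series in t\<close>

(* The coefficient of t^r in sum_k (n)_k t^(m+k) / (k! (m+k)!), i.e. the term k = r - m. *)
definition F_coeff :: "int \<Rightarrow> int \<Rightarrow> nat \<Rightarrow> real" where
  "F_coeff n m r =
     (if m \<le> int r then pochhammer (of_int n) (nat (int r - m)) / fact (nat (int r - m)) / fact r
      else 0)"

lemma F_coeff_pascal: "F_coeff n m r = F_coeff n (m + 1) r + F_coeff (n - 1) m r"
proof (cases "m < int r")
  case True
  define k where "k = nat (int r - (m + 1))"
  have k: "nat (int r - m) = Suc k" and "m \<le> int r" "m + 1 \<le> int r"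
    using True unfolding k_def by linarith+
  then show ?thesis
    unfolding F_coeff_def k k_def[symmetric] pochhammer_div_fact_Suc[of "of_int n" k]
    by (simp add: add_divide_distrib)
next
  case False
  then show ?thesis by (cases "m = int r") (simp_all add: F_coeff_def)
qed

lemma F_coeff_Suc: "of_nat (Suc r) * F_coeff n m (Suc r) = F_coeff n (m - 1) r"
proof (cases "m \<le> int r + 1")
  case True
  then have "nat (int (Suc r) - m) = nat (int r - (m - 1))" by simp
  with True show ?thesis by (simp add: F_coeff_def del: of_nat_Suc)
qed (simp add: F_coeff_def)

lemma F_coeff_at_0:
  "F_coeff n m 0 = (if m \<le> 0 then pochhammer (of_int n) (nat (- m)) / fact (nat (- m)) else 0)"
  by (simp add: F_coeff_def)

lemma abs_F_coeff_le:
  "\<bar>F_coeff n m r\<bar> \<le> (\<bar>of_int n\<bar> + 1) ^ (nat \<bar>m\<bar> + r) / fact r"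
proof (cases "m \<le> int r")
  case True
  let ?k = "nat (int r - m)"
  have "\<bar>F_coeff n m r\<bar> = \<bar>pochhammer (of_int n) ?k / fact ?k\<bar> / fact r"
    using True by (simp add: F_coeff_def)
  also have "\<dots> \<le> (\<bar>of_int n\<bar> + 1) ^ ?k / fact r"
    by (intro divide_right_mono abs_pochhammer_div_fact_le) auto
  also have "\<dots> \<le> (\<bar>of_int n\<bar> + 1) ^ (nat \<bar>m\<bar> + r) / fact r"
    by (intro divide_right_mono power_increasing) auto
  finally show ?thesis .
qed (simp add: F_coeff_def)

definition F_fps :: "int \<Rightarrow> int \<Rightarrow> real fps" where
  "F_fps n m = fps_exp (- 1) * Abs_fps (F_coeff n m)"

lemma F_fps_pascal: "F_fps n m = F_fps n (m + 1) + F_fps (n - 1) m"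
proof -
  have "Abs_fps (F_coeff n m) = Abs_fps (F_coeff n (m + 1)) + Abs_fps (F_coeff (n - 1) m)"
    by (rule fps_ext) (simp add: F_coeff_pascal[of n m])
  then show ?thesis by (simp add: F_fps_def distrib_left)
qed

lemma fps_deriv_F_fps: "fps_deriv (F_fps n m) = F_fps n (m - 1) - F_fps n m"
proof -
  have "fps_deriv (Abs_fps (F_coeff n m)) = Abs_fps (F_coeff n (m - 1))"
    by (rule fps_ext) (simp add: fps_deriv_nth F_coeff_Suc[symmetric])
  then show ?thesis
    by (simp add: F_fps_def algebra_simps fps_const_neg[symmetric])
qed

lemma fps_conv_radius_F_coeff: "fps_conv_radius (Abs_fps (F_coeff n m)) = \<infinity>"
  unfolding fps_conv_radius_def
proof (rule conv_radius_inftyI'')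
  fix z :: real
  define B where "B = \<bar>real_of_int n\<bar> + 1"
  have summable: "summable (\<lambda>r. B ^ nat \<bar>m\<bar> * ((B * \<bar>z\<bar>) ^ r / fact r))"
    using sums_exp_real[of "B * \<bar>z\<bar>"] by (intro summable_mult sums_summable)
  have bound: "norm (F_coeff n m r * z ^ r) \<le> B ^ nat \<bar>m\<bar> * ((B * \<bar>z\<bar>) ^ r / fact r)" for r
    using mult_right_mono[OF abs_F_coeff_le[of n m r], of "\<bar>z\<bar> ^ r"]
    by (simp add: B_def abs_mult power_abs power_add power_mult_distrib)
  show "summable (\<lambda>r. fps_nth (Abs_fps (F_coeff n m)) r * z ^ r)"
    by (rule summable_comparison_test'[OF summable, where N = 0]) (use bound in simp)
qed

lemma fps_conv_radius_F_fps: "fps_conv_radius (F_fps n m) = \<infinity>"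
  using fps_conv_radius_mult[of "fps_exp (- 1)" "Abs_fps (F_coeff n m)"]
  by (simp add: F_fps_def fps_conv_radius_F_coeff)

lemma eval_F_fps: "eval_fps (F_fps n m) t = F n m t"
proof -
  let ?g = "\<lambda>k. pochhammer (real_of_int n) k / fact k *
           (if m + int k \<ge> 0 then t ^ nat (m + int k) / fact (nat (m + int k)) else 0)"
  let ?h = "\<lambda>r. F_coeff n m r * t ^ r"
  have shift: "(\<lambda>k. ?g (k + nat (- m))) = (\<lambda>k. ?h (k + nat m))"
  proof
    fix k
    show "?g (k + nat (- m)) = ?h (k + nat m)"
    proof (cases "0 \<le> m")
      case True
      then have "nat (m + int k) = k + nat m" by simp
      with True show ?thesis by (simp add: F_coeff_def)
    next
      case False
      then have "nat (int k - m) = k + nat (- m)" by simp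
      with False show ?thesis by (simp add: F_coeff_def)
    qed
  qed
  have "?h sums eval_fps (Abs_fps (F_coeff n m)) t"
    using sums_eval_fps[of t "Abs_fps (F_coeff n m)"] by (simp add: fps_conv_radius_F_coeff)
  then have "(\<lambda>k. ?h (k + nat m)) sums eval_fps (Abs_fps (F_coeff n m)) t"
    by (subst sums_zero_iff_shift) (auto simp: F_coeff_def)
  then have "?g sums eval_fps (Abs_fps (F_coeff n m)) t"
    unfolding shift[symmetric] by (subst (asm) sums_zero_iff_shift) auto
  then show ?thesis
    by (simp add: F_fps_def F_def eval_fps_mult fps_conv_radius_F_coeff sums_iff)
qed

section \<open>Sums of generator powers and of transition probabilities\<close>

lemma length_jump [simp]: "length (jump xs j) = length xs"
  by (simp add: jump_def)

lemma sorted_wrt_jump: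
  assumes "sorted_wrt (<) xs" and "can_jump xs j"
  shows "sorted_wrt (<) (jump xs j)"
  unfolding sorted_wrt_iff_nth_less
proof (intro allI impI)
  fix i k assume ik: "i < k" "k < length (jump xs j)"
  have less: "xs ! i < xs ! k" if "i < k" "k < length xs" for i k
    using assms(1) that by (simp add: sorted_wrt_iff_nth_less)
  show "jump xs j ! i < jump xs j ! k"
  proof (cases "i = j")
    case True
    with assms(2) ik have "xs ! j + 1 < xs ! Suc j" "xs ! Suc j \<le> xs ! k" if "k \<noteq> Suc j"
      using less[of "Suc j" k] that by (auto simp: can_jump_def)
    with True assms(2) ik show ?thesis
      by (cases "k = Suc j") (auto simp: jump_def can_jump_def)
  next
    case False
    with assms(2) ik less[of i k] show ?thesis
      by (auto simp: jump_def nth_list_update can_jump_def)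
  qed
qed

lemma sorted_wrt_less_nth_ge:
  assumes "sorted_wrt (<) z" "j < length z"
  shows "z ! 0 + int j \<le> z ! j"
  using assms(2)
proof (induction j)
  case (Suc j)
  then have "z ! j < z ! Suc j" using assms(1) by (simp add: sorted_wrt_iff_nth_less)
  with Suc show ?case by simp
qed simp

lemma sum_abs_Qpow_le:
  assumes "finite R"
  shows "(\<Sum>x\<in>R. \<bar>Qpow n z x\<bar>) \<le> (2 * real (length z)) ^ n"
proof (induction n arbitrary: z)
  case 0
  show ?case using assms by (simp add: sum.If_cases)
next
  case (Suc n)
  let ?L = "length z"
  have "(\<Sum>x\<in>R. \<bar>Qpow (Suc n) z x\<bar>) \<le> (\<Sum>x\<in>R. \<Sum>j<?L. \<bar>Qpow n (jump z j) x\<bar> + \<bar>Qpow n z x\<bar>)"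
  proof (intro sum_mono)
    fix x
    have "\<bar>Qpow (Suc n) z x\<bar> \<le> (\<Sum>j<?L. \<bar>if can_jump z j then Qpow n (jump z j) x - Qpow n z x else 0\<bar>)"
      by (simp only: Qpow.simps sum_abs)
    also have "\<dots> \<le> (\<Sum>j<?L. \<bar>Qpow n (jump z j) x\<bar> + \<bar>Qpow n z x\<bar>)"
      by (intro sum_mono) auto
    finally show "\<bar>Qpow (Suc n) z x\<bar> \<le> (\<Sum>j<?L. \<bar>Qpow n (jump z j) x\<bar> + \<bar>Qpow n z x\<bar>)" .
  qed
  also have "\<dots> = (\<Sum>j<?L. (\<Sum>x\<in>R. \<bar>Qpow n (jump z j) x\<bar>) + (\<Sum>x\<in>R. \<bar>Qpow n z x\<bar>))"
    by (subst sum.swap) (simp add: sum.distrib)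
  also have "\<dots> \<le> (\<Sum>j<?L. (2 * real ?L) ^ n + (2 * real ?L) ^ n)"
    by (intro sum_mono add_mono) (use Suc.IH[of "jump z _"] Suc.IH[of z] in auto)
  also have "\<dots> = (2 * real ?L) ^ Suc n" by simp
  finally show ?case .
qed

lemma Qpow_has_sum_backward_solution:
  fixes G :: "int list \<Rightarrow> real fps"
  assumes closed: "\<And>z j. z \<in> C \<Longrightarrow> can_jump z j \<Longrightarrow> jump z j \<in> C"
    and initial: "\<And>z. z \<in> C \<Longrightarrow> fps_nth (G z) 0 = of_bool (z \<in> S)"
    and backward: "\<And>z. z \<in> C \<Longrightarrow>
          fps_deriv (G z) = (\<Sum>j<length z. if can_jump z j then G (jump z j) - G z else 0)"
    and "z \<in> C"
  shows "((\<lambda>x. Qpow n z x) has_sum (fact n * fps_nth (G z) n)) S"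
  using \<open>z \<in> C\<close>
proof (induction n arbitrary: z)
  case 0
  show ?case
  proof (cases "z \<in> S")
    case True
    then show ?thesis using 0 initial by (intro has_sum_finite_neutralI[of "{z}"]) auto
  next
    case False
    then have "((\<lambda>x. Qpow 0 z x) has_sum 0) S" by (intro has_sum_0) auto
    with False 0 initial show ?thesis by simp
  qed
next
  case (Suc n)
  have "fact (Suc n) * fps_nth (G z) (Suc n) = fact n * fps_nth (fps_deriv (G z)) n"
    by (simp add: fps_deriv_nth)
  also have "\<dots> = (\<Sum>j<length z. if can_jump z j
                       then fact n * fps_nth (G (jump z j)) n - fact n * fps_nth (G z) n else 0)"
    (is "_ = ?rhs")
    by (simp add: backward[OF Suc.prems] fps_sum_nth sum_distrib_left) (intro sum.cong; simp add: algebra_simps)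
  finally have coeff: "fact (Suc n) * fps_nth (G z) (Suc n) = ?rhs" .
  have "((\<lambda>x. Qpow (Suc n) z x) has_sum ?rhs) S"
    unfolding Qpow.simps using Suc closed by (intro has_sum_sum) (auto intro: has_sum_diff)
  then show ?case unfolding coeff .
qed

lemma sum_abs_Qpow_exp_term_le:
  assumes "finite R"
  shows "(\<Sum>x\<in>R. \<bar>t ^ n / fact n * Qpow n y x\<bar>) \<le> (2 * real (length y) * \<bar>t\<bar>) ^ n / fact n"
proof -
  have "(\<Sum>x\<in>R. \<bar>t ^ n / fact n * Qpow n y x\<bar>) = \<bar>t\<bar> ^ n / fact n * (\<Sum>x\<in>R. \<bar>Qpow n y x\<bar>)"
    by (simp add: abs_mult power_abs sum_distrib_left)
  also have "\<dots> \<le> \<bar>t\<bar> ^ n / fact n * (2 * real (length y)) ^ n"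
    by (intro mult_left_mono sum_abs_Qpow_le assms) auto
  also have "\<dots> = (2 * real (length y) * \<bar>t\<bar>) ^ n / fact n"
    by (simp add: power_mult_distrib)
  finally show ?thesis .
qed

lemma abs_summable_Qpow_exp_series:
  "(\<lambda>(n, x). t ^ n / fact n * Qpow n y x) abs_summable_on A"
proof -
  define c where "c = 2 * real (length y) * \<bar>t\<bar>"
  have "(\<Sum>p\<in>P. norm ((\<lambda>(n, x). t ^ n / fact n * Qpow n y x) p)) \<le> exp c" if "finite P" for P
  proof -
    have "(\<Sum>p\<in>P. norm ((\<lambda>(n, x). t ^ n / fact n * Qpow n y x) p)) \<le>
            (\<Sum>p\<in>fst ` P \<times> snd ` P. norm ((\<lambda>(n, x). t ^ n / fact n * Qpow n y x) p))"
      by (rule sum_mono2) (use that in \<open>force+\<close>)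
    also have "\<dots> = (\<Sum>n\<in>fst ` P. \<Sum>x\<in>snd ` P. \<bar>t ^ n / fact n * Qpow n y x\<bar>)"
      by (simp add: sum.cartesian_product case_prod_unfold)
    also have "\<dots> \<le> (\<Sum>n\<in>fst ` P. c ^ n / fact n)"
      unfolding c_def by (intro sum_mono sum_abs_Qpow_exp_term_le) (use that in auto)
    also have "\<dots> \<le> (\<Sum>n. c ^ n / fact n)"
      using sums_exp_real[of c] that by (intro sum_le_suminf) (auto simp: sums_iff c_def)
    finally show ?thesis using sums_exp_real[of c] by (simp add: sums_iff)
  qed
  then show ?thesis
    unfolding abs_summable_iff_bdd_above by (intro bdd_aboveI) auto
qed

lemma tasep_P_has_sum:
  assumes coeff: "\<And>n. ((\<lambda>x. Qpow n y x) has_sum g n) S"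
    and series: "(\<lambda>n. t ^ n / fact n * g n) sums s"
  shows "((\<lambda>x. tasep_P x t y) has_sum s) S"
proof -
  let ?f = "\<lambda>(n, x). t ^ n / fact n * Qpow n y x"
  obtain T where T: "(?f has_sum T) (UNIV \<times> S)"
    using abs_summable_summable[OF abs_summable_Qpow_exp_series[of t y "UNIV \<times> S"]]
    unfolding summable_on_def by blast
  have columns: "((\<lambda>x. ?f (n, x)) has_sum t ^ n / fact n * g n) S" for n
    using has_sum_cmult_right[OF coeff[of n], of "t ^ n / fact n"] by simp
  have "((\<lambda>n. t ^ n / fact n * g n) has_sum T) UNIV"
    by (rule has_sum_SigmaD[OF T]) (rule columns)
  then have "T = s"
    using sums_unique2[OF has_sum_imp_sums series] by blast
  have rows: "((\<lambda>n. ?f (n, x)) has_sum tasep_P x t y) UNIV" for x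
  proof -
    have norm_summable: "summable (\<lambda>n. norm (?f (n, x)))"
      by (rule summable_comparison_test'[OF sums_summable[OF sums_exp_real], where N = 0])
        (use sum_abs_Qpow_exp_term_le[of "{x}" t] in simp)
    then have "(\<lambda>n. ?f (n, x)) sums tasep_P x t y"
      unfolding tasep_P_def by (simp add: summable_sums summable_norm_cancel)
    with norm_summable show ?thesis
      by (rule norm_summable_imp_has_sum)
  qed
  have "((\<lambda>(x, n). ?f (n, x)) has_sum T) (S \<times> UNIV)"
    using T by (subst (asm) has_sum_swap) simp
  from has_sum_SigmaD[OF this] rows \<open>T = s\<close> show ?thesis by simp
qed

section \<open>The determinantal solution of the backward equation\<close>

definition tasep_entry_fps :: "int \<Rightarrow> int list \<Rightarrow> nat \<Rightarrow> nat \<Rightarrow> real fps" where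
  "tasep_entry_fps a z j k = F_fps (int k - int j + 1) (a - z ! j + int k)"

definition tasep_det_fps :: "int \<Rightarrow> int list \<Rightarrow> real fps" where
  "tasep_det_fps a z = leibniz_det (length z) (tasep_entry_fps a z)"

lemma tasep_entry_fps_jump_other: "i \<noteq> j \<Longrightarrow> tasep_entry_fps a (jump z j) i = tasep_entry_fps a z i"
  by (rule ext) (simp add: tasep_entry_fps_def jump_def)

lemma tasep_entry_fps_update_jump:
  "(tasep_entry_fps a z)(j := tasep_entry_fps a (jump z j) j) = tasep_entry_fps a (jump z j)"
  by (rule ext) (simp add: tasep_entry_fps_jump_other)

lemma fps_deriv_tasep_entry_fps:
  assumes "j < length z"
  shows "fps_deriv (tasep_entry_fps a z j k) = tasep_entry_fps a (jump z j) j k - tasep_entry_fps a z j k"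
  using assms fps_deriv_F_fps[of "int k - int j + 1" "a - z ! j + int k"]
  by (simp add: tasep_entry_fps_def jump_def algebra_simps)

lemma fps_deriv_tasep_det_fps:
  "fps_deriv (tasep_det_fps a z) = (\<Sum>j<length z. tasep_det_fps a (jump z j) - tasep_det_fps a z)"
  unfolding tasep_det_fps_def fps_deriv_leibniz_det
proof (intro sum.cong refl)
  fix j assume "j \<in> {..<length z}"
  then show "leibniz_det (length z) ((tasep_entry_fps a z)(j := (\<lambda>k. fps_deriv (tasep_entry_fps a z j k)))) =
      leibniz_det (length (jump z j)) (tasep_entry_fps a (jump z j)) - leibniz_det (length z) (tasep_entry_fps a z)"
    by (simp add: fps_deriv_tasep_entry_fps leibniz_det_row_diff tasep_entry_fps_update_jump)
qed

lemma tasep_det_fps_jump_blocked: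
  assumes "Suc j < length z" "z ! Suc j = z ! j + 1"
  shows "tasep_det_fps a (jump z j) = tasep_det_fps a z"
proof -
  have "tasep_entry_fps a (jump z j) j k = tasep_entry_fps a z j k + tasep_entry_fps a z (Suc j) k" for k
    using F_fps_pascal[of "int k - int j + 1" "a - z ! j - 1 + int k"] assms
    by (simp add: tasep_entry_fps_def jump_def algebra_simps)
  then have "tasep_entry_fps a (jump z j) =
      (tasep_entry_fps a z)(j := (\<lambda>k. tasep_entry_fps a z j k + tasep_entry_fps a z (Suc j) k))"
    using tasep_entry_fps_jump_other by fastforce
  then have "tasep_det_fps a (jump z j) =
      tasep_det_fps a z + leibniz_det (length z) ((tasep_entry_fps a z)(j := tasep_entry_fps a z (Suc j)))"
    using assms by (simp add: tasep_det_fps_def leibniz_det_row_add)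
  also have "leibniz_det (length z) ((tasep_entry_fps a z)(j := tasep_entry_fps a z (Suc j))) = 0"
    using assms by (intro leibniz_det_equal_rows[of j _ "Suc j"]) auto
  finally show ?thesis by simp
qed

lemma tasep_det_fps_backward_equation:
  assumes "sorted_wrt (<) z"
  shows "fps_deriv (tasep_det_fps a z) =
           (\<Sum>j<length z. if can_jump z j then tasep_det_fps a (jump z j) - tasep_det_fps a z else 0)"
  unfolding fps_deriv_tasep_det_fps
proof (intro sum.cong refl)
  fix j assume j: "j \<in> {..<length z}"
  have "tasep_det_fps a (jump z j) = tasep_det_fps a z" if "\<not> can_jump z j"
  proof (rule tasep_det_fps_jump_blocked)
    show "Suc j < length z" using j that by (auto simp: can_jump_def)
    then have "z ! j < z ! Suc j" using assms by (simp add: sorted_wrt_iff_nth_less)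
    with j that show "z ! Suc j = z ! j + 1" by (auto simp: can_jump_def)
  qed
  then show "tasep_det_fps a (jump z j) - tasep_det_fps a z =
      (if can_jump z j then tasep_det_fps a (jump z j) - tasep_det_fps a z else 0)"
    by simp
qed

lemma fps_conv_radius_tasep_entry_fps: "fps_conv_radius (tasep_entry_fps a z j k) = \<infinity>"
  by (simp add: tasep_entry_fps_def fps_conv_radius_F_fps)

lemma fps_conv_radius_tasep_det_fps: "fps_conv_radius (tasep_det_fps a z) = \<infinity>"
  by (simp add: tasep_det_fps_def fps_conv_radius_leibniz_det fps_conv_radius_tasep_entry_fps)

lemma eval_tasep_det_fps:
  "eval_fps (tasep_det_fps a z) t = leibniz_det (length z) (\<lambda>j k. F (int k - int j + 1) (a - z ! j + int k) t)"
  by (simp add: tasep_det_fps_def eval_fps_leibniz_det[OF fps_conv_radius_tasep_entry_fps]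
      tasep_entry_fps_def eval_F_fps)

lemma fps_nth_tasep_det_fps_0:
  assumes "sorted_wrt (<) z" "z \<noteq> []"
  shows "fps_nth (tasep_det_fps a z) 0 = of_bool (a \<le> z ! 0)"
proof -
  define B where "B j k = F_coeff (int k - int j + 1) (a - z ! j + int k) 0" for j k
  have "fps_nth (tasep_det_fps a z) 0 = eval_fps (tasep_det_fps a z) 0"
    by (simp add: eval_fps_at_0)
  also have "\<dots> = leibniz_det (length z) (\<lambda>j k. eval_fps (tasep_entry_fps a z j k) 0)"
    by (simp add: tasep_det_fps_def eval_fps_leibniz_det[OF fps_conv_radius_tasep_entry_fps])
  also have "(\<lambda>j k. eval_fps (tasep_entry_fps a z j k) 0) = B"
    by (intro ext) (simp add: eval_fps_at_0 tasep_entry_fps_def F_fps_def B_def)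
  finally have det_B: "fps_nth (tasep_det_fps a z) 0 = leibniz_det (length z) B" .
  show ?thesis
  proof (cases "a \<le> z ! 0")
    case False
    then have "leibniz_det (length z) B = 0"
      using assms(2) by (intro leibniz_det_zero_row[of 0]) (auto simp: B_def F_coeff_at_0)
    with False det_B show ?thesis by simp
  next
    case True
    have "B i j = 0" if "j < i" "i < length z" for i j
    proof -
      have "z ! 0 + int i \<le> z ! i" using sorted_wrt_less_nth_ge[OF assms(1) that(2)] .
      then have "pochhammer (of_int (int j - int i + 1) :: real) (nat (z ! i - a - int j)) = 0"
        using True that by (subst pochhammer_eq_0_iff) (auto intro!: exI[of _ "i - j - 1"])
      with True \<open>z ! 0 + int i \<le> z ! i\<close> that show ?thesis
        by (simp add: B_def F_coeff_at_0)
    qed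
    moreover have "B i i = 1" if "i < length z" for i
      using True sorted_wrt_less_nth_ge[OF assms(1) that]
      by (simp add: B_def F_coeff_at_0 pochhammer_fact[symmetric])
    ultimately have "leibniz_det (length z) B = 1"
      by (rule leibniz_det_upper_unitriangular)
    with True det_B show ?thesis by simp
  qed
qed

theorem corollary2:
  fixes N :: nat and y :: "int list" and M :: int and t :: real
  assumes "N \<ge> 1" and "length y = N" and "sorted_wrt (<) y" and "t \<ge> 0"
  shows "((\<lambda>x. tasep_P x t y) has_sum
           det (mat N N (\<lambda>(j, k). F (int k - int j + 1) (y ! 0 - y ! j + M + int k) t)))
         {x. length x = N \<and> sorted_wrt (<) x \<and> x ! 0 \<ge> y ! 0 + M}"
proof -
  define a where "a = y ! 0 + M"
  let ?C = "{z. length z = N \<and> sorted_wrt (<) z}"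
  let ?S = "{x. length x = N \<and> sorted_wrt (<) x \<and> x ! 0 \<ge> y ! 0 + M}"
  let ?G = "tasep_det_fps a"
  have "((\<lambda>x. Qpow n y x) has_sum (fact n * fps_nth (?G y) n)) ?S" for n
  proof (rule Qpow_has_sum_backward_solution[where C = ?C])
    show "fps_nth (?G z) 0 = of_bool (z \<in> ?S)" if "z \<in> ?C" for z
    proof -
      from that assms(1) have "z \<noteq> []" by auto
      with that show ?thesis by (simp add: fps_nth_tasep_det_fps_0 a_def)
    qed
  qed (use assms in \<open>auto simp: sorted_wrt_jump tasep_det_fps_backward_equation\<close>)
  moreover have "(\<lambda>n. t ^ n / fact n * (fact n * fps_nth (?G y) n)) sums eval_fps (?G y) t"
    using sums_eval_fps[of t "?G y"] by (simp add: fps_conv_radius_tasep_det_fps mult.commute)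
  ultimately have "((\<lambda>x. tasep_P x t y) has_sum eval_fps (?G y) t) ?S"
    by (rule tasep_P_has_sum)
  also have "eval_fps (?G y) t = det (mat N N (\<lambda>(j, k). F (int k - int j + 1) (y ! 0 - y ! j + M + int k) t))"
    by (simp add: eval_tasep_det_fps det_mat_eq_leibniz_det a_def assms(2) algebra_simps)
  finally show ?thesis .
qed

end
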